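(* Let $m,n\ge1$, let $a_1,\dots,a_n$ be distinct nonnegative real numbers, let $m_1,\dots,m_n\ge1$ be integers, let $c_0,\dots,c_{m-1},b_k^{(j)}\in\mathbb{C}$, and let $$r(\lambda)=\lambda^m-c_{m-1}\lambda^{m-1}-\cdots-c_1\lambda-c_0-\sum_{j=1}^n\sum_{k=1}^{m_j}\frac{b_k^{(j)}}{(\lambda-a_j)^k}.$$ If $\lambda_0$ is a zero of $r$, then $$|\lambda_0|\le\frac{\alpha+\beta+\sqrt{(\alpha-\beta)^2+(\gamma+\delta)^2}}{2},$$ where $\alpha=\max_{1\le j\le n}\{a_j+\cos(\frac{\pi}{m_j+1})\}$, $\beta=w(\mathcal{B}_0)$, $\gamma=\sqrt{\sum_{j=1}^n m_j}$, $\delta=\sqrt{\sum_{j=1}^n\sum_{k=1}^{m_j}|b_k^{(j)}|^2}$, and $\mathcal{B}_0$ is the $m\times m$ matrix with $1$'s on the superdiagonal, last row $(c_0,c_1,\dots,c_{m-1})$, and zeros elsewhere.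
   Context: A zero of $r$ is a $\lambda_0\in\mathbb{C}\setminus\{a_1,\dots,a_n\}$ with $r(\lambda_0)=0$. For a square complex matrix $A$, $w(A)=\sup\{|x^*Ax|: x^*x=1\}$ is its numerical radius. *)

theory Defs
  imports "HOL-Analysis.Analysis"
begin

text \<open>Square complex matrices of size m are represented as functions
  nat => nat => complex, only entries with indices < m matter.
  Vectors in C^m are functions nat => complex with indices < m.\<close>

definition numerical_radius :: "nat \<Rightarrow> (nat \<Rightarrow> nat \<Rightarrow> complex) \<Rightarrow> real" where
  "numerical_radius m A =
     Sup {cmod (\<Sum>i<m. \<Sum>j<m. cnj (x i) * A i j * x j) | x :: nat \<Rightarrow> complex.
            (\<Sum>i<m. (cmod (x i))^2) = 1}"

definition B0 :: "nat \<Rightarrow> (nat \<Rightarrow> complex) \<Rightarrow> nat \<Rightarrow> nat \<Rightarrow> complex" where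
  "B0 m c i j = (if j = i + 1 then 1 else if i = m - 1 then c j else 0)"

definition rfun :: "nat \<Rightarrow> (nat \<Rightarrow> complex) \<Rightarrow> nat \<Rightarrow> (nat \<Rightarrow> real) \<Rightarrow> (nat \<Rightarrow> nat)
      \<Rightarrow> (nat \<Rightarrow> nat \<Rightarrow> complex) \<Rightarrow> complex \<Rightarrow> complex" where
  "rfun m c n a mm b z =
     z ^ m - (\<Sum>i<m. c i * z ^ i)
       - (\<Sum>j=1..n. \<Sum>k=1..mm j. b j k / (z - complex_of_real (a j)) ^ k)"

end

theory Submission
  imports Defs
begin

(* With u = (1, z, ..., z^(m-1)) and v_j = ((z - a_j)^(-1), ..., (z - a_j)^(-m_j)), the zero z
   of r is an eigenvalue with eigenvector (u, v_1, ..., v_n) of a block matrix whose diagonal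
   blocks are B_0 and the Jordan blocks J_(m_j)(a_j); off the diagonal it has only the entries
   b_k^(j) in its last row and the entries 1 coupling u_0 to the first entries of the v_j.
   In the Rayleigh quotient of this eigenvector, with S = |u|^2 and T = sum_j |v_j|^2, the block
   B_0 contributes at most beta S, the Jordan blocks at most alpha T because
   w(J_K(0)) = cos(pi/(K+1)), and the coupling at most (gamma + delta) sqrt S sqrt T by
   Cauchy-Schwarz. The resulting quadratic form is bounded by the larger eigenvalue of
   [[beta, (gamma+delta)/2], [(gamma+delta)/2, alpha]], which is the claimed bound. *)

lemma sum_shifted_products_le_cos:
  fixes y :: "nat \<Rightarrow> real"
  assumes "y 0 = 0"
  shows "(\<Sum>k=1..K. y k * y (k - 1)) \<le> cos (pi / real (K + 1)) * (\<Sum>k=1..K. (y k)\<^sup>2)"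
proof -
  (* The weights s_k = sin (k \<theta>) vanish at k = 0 and k = K + 1 and satisfy
     s_(k-1) + s_(k+1) = 2 cos \<theta> s_k. Splitting y_k y_(k-1) by AM-GM with ratio s_(k-1) / s_k,
     the second halves telescope onto the first ones and the recurrence turns each coefficient
     into cos \<theta>. *)
  define \<theta> where "\<theta> = pi / real (K + 1)"
  define s where "s k = sin (real k * \<theta>)" for k
  have s_pos: "s k > 0" if "1 \<le> k" "k \<le> K" for k
  proof -
    have "pi * real k < pi * (real K + 1)"
      using that by (intro mult_strict_left_mono) auto
    then have "real k * \<theta> < pi"
      by (simp add: \<theta>_def field_simps)
    then show ?thesis
      using that by (simp add: s_def \<theta>_def sin_gt_zero)
  qed
  have s_rec: "s (k - 1) + s (k + 1) = 2 * cos \<theta> * s k" if "1 \<le> k" for k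
  proof -
    have "real (k - 1) * \<theta> = real k * \<theta> - \<theta>" "real (k + 1) * \<theta> = real k * \<theta> + \<theta>"
      using that by (simp_all add: of_nat_diff algebra_simps)
    then show ?thesis
      by (simp add: s_def sin_diff sin_add)
  qed
  define g where "g k = s (k + 1) / s k * (y k)\<^sup>2 / 2" for k
  have g_ends: "g 0 = 0" "g K = 0"
    using assms by (simp_all add: g_def s_def \<theta>_def)
  have "y k * y (k - 1) \<le> s (k - 1) / s k * (y k)\<^sup>2 / 2 + g (k - 1)" if "k \<in> {1..K}" for k
  proof (cases "k = 1")
    case True
    then show ?thesis
      using assms by (simp add: g_def s_def)
  next
    case False
    then have "s (k - 1) > 0" "s k > 0"
      using that s_pos by auto
    then show ?thesis
      using sum_squares_bound[of "sqrt (s (k - 1) / s k) * y k" "sqrt (s k / s (k - 1)) * y (k - 1)"]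
      using False that by (simp add: g_def power_mult_distrib real_sqrt_mult[symmetric] field_simps)
  qed
  then have "(\<Sum>k=1..K. y k * y (k - 1)) \<le> (\<Sum>k=1..K. s (k - 1) / s k * (y k)\<^sup>2 / 2 + g (k - 1))"
    by (rule sum_mono)
  also have "\<dots> = (\<Sum>k=1..K. (s (k - 1) + s (k + 1)) / s k * (y k)\<^sup>2 / 2)"
  proof -
    have "(\<Sum>k=1..K. g (k - 1)) = (\<Sum>k=1..K. g k)"
      using g_ends sum.lessThan_Suc_shift[of g K] by (simp add: sum.atLeast1_atMost_eq)
    then show ?thesis
      by (simp add: sum.distrib g_def add_divide_distrib distrib_right)
  qed
  also have "\<dots> = (\<Sum>k=1..K. cos \<theta> * (y k)\<^sup>2)"
  proof (rule sum.cong)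
    fix k assume "k \<in> {1..K}"
    then have "(s (k - 1) + s (k + 1)) / s k = 2 * cos \<theta>"
      using s_rec[of k] s_pos[of k] by simp
    then show "(s (k - 1) + s (k + 1)) / s k * (y k)\<^sup>2 / 2 = cos \<theta> * (y k)\<^sup>2"
      by simp
  qed simp
  finally show ?thesis
    by (simp add: \<theta>_def sum_distrib_left)
qed

lemma cmod_double_sum_mult_le:
  fixes f g :: "'a \<Rightarrow> 'b \<Rightarrow> complex"
  assumes "finite J" "\<And>j. j \<in> J \<Longrightarrow> finite (K j)"
  shows "cmod (\<Sum>j\<in>J. \<Sum>k\<in>K j. f j k * g j k)
    \<le> sqrt (\<Sum>j\<in>J. \<Sum>k\<in>K j. (cmod (f j k))\<^sup>2)
      * sqrt (\<Sum>j\<in>J. \<Sum>k\<in>K j. (cmod (g j k))\<^sup>2)"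
proof -
  have sum_Sigma: "(\<Sum>j\<in>J. \<Sum>k\<in>K j. h j k) = (\<Sum>(j, k)\<in>Sigma J K. h j k)"
    for h :: "'a \<Rightarrow> 'b \<Rightarrow> 'c::comm_monoid_add"
    using assms by (simp add: sum.Sigma)
  have "cmod (\<Sum>(j, k)\<in>Sigma J K. f j k * g j k)
      \<le> (\<Sum>(j, k)\<in>Sigma J K. \<bar>cmod (f j k)\<bar> * \<bar>cmod (g j k)\<bar>)"
    by (rule order.trans[OF norm_sum]) (simp add: case_prod_beta norm_mult)
  also have "\<dots> \<le> L2_set (\<lambda>(j, k). cmod (f j k)) (Sigma J K)
      * L2_set (\<lambda>(j, k). cmod (g j k)) (Sigma J K)"
    using L2_set_mult_ineq[of "\<lambda>(j, k). cmod (f j k)" "\<lambda>(j, k). cmod (g j k)"]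
    by (simp add: case_prod_beta)
  finally show ?thesis
    by (simp add: sum_Sigma L2_set_def case_prod_beta)
qed

lemma le_max_eigenvalue_2x2:
  fixes x \<alpha> \<beta> g S T :: real
  assumes "g \<ge> 0" "S \<ge> 0" "T \<ge> 0" "S + T > 0"
    and "x * (S + T) \<le> \<beta> * S + \<alpha> * T + g * sqrt S * sqrt T"
  shows "x \<le> (\<alpha> + \<beta> + sqrt ((\<alpha> - \<beta>)\<^sup>2 + g\<^sup>2)) / 2"
proof -
  define D where "D = sqrt ((\<alpha> - \<beta>)\<^sup>2 + g\<^sup>2)"
  define L where "L = (\<alpha> + \<beta> + D) / 2"
  have "D \<ge> \<bar>\<alpha> - \<beta>\<bar>"
    unfolding D_def by (rule real_le_rsqrt) simp
  then have L_ge: "L - \<beta> \<ge> 0" "L - \<alpha> \<ge> 0"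
    by (auto simp: L_def)
  have "4 * ((L - \<beta>) * (L - \<alpha>)) = D\<^sup>2 - (\<alpha> - \<beta>)\<^sup>2"
    by (simp add: L_def power2_eq_square field_simps)
  also have "\<dots> = g\<^sup>2"
    by (simp add: D_def)
  finally have "g = 2 * (sqrt (L - \<beta>) * sqrt (L - \<alpha>))"
    using assms(1) L_ge
    by (metis real_sqrt_abs real_sqrt_mult real_sqrt_four abs_of_nonneg real_sqrt_mult_self)
  then have "g * sqrt S * sqrt T = 2 * (sqrt (L - \<beta>) * sqrt S) * (sqrt (L - \<alpha>) * sqrt T)"
    by simp
  also have "\<dots> \<le> (sqrt (L - \<beta>) * sqrt S)\<^sup>2 + (sqrt (L - \<alpha>) * sqrt T)\<^sup>2"
    by (rule sum_squares_bound)
  also have "\<dots> = (L - \<beta>) * S + (L - \<alpha>) * T"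
    using L_ge assms(2,3) by (simp add: power_mult_distrib)
  finally have "x * (S + T) \<le> L * (S + T)"
    using assms(5) by (simp add: algebra_simps)
  then show ?thesis
    using assms(4) by (simp add: L_def D_def)
qed

lemma bdd_above_numerical_range:
  "bdd_above {cmod (\<Sum>i<m. \<Sum>j<m. cnj (x i) * A i j * x j) | x :: nat \<Rightarrow> complex.
                (\<Sum>i<m. (cmod (x i))\<^sup>2) = 1}"
proof (rule bdd_aboveI, safe)
  fix x :: "nat \<Rightarrow> complex"
  assume unit: "(\<Sum>i<m. (cmod (x i))\<^sup>2) = 1"
  have x_le_1: "cmod (x i) \<le> 1" if "i < m" for i
  proof -
    have "(cmod (x i))\<^sup>2 \<le> 1"
      using unit member_le_sum[of i "{..<m}" "\<lambda>i. (cmod (x i))\<^sup>2"] that by simp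
    then show ?thesis
      by (simp add: power_le_one_iff)
  qed
  have "cmod (\<Sum>i<m. \<Sum>j<m. cnj (x i) * A i j * x j)
      \<le> (\<Sum>i<m. \<Sum>j<m. cmod (x i) * cmod (A i j) * cmod (x j))"
    by (intro order.trans[OF norm_sum sum_mono] order.trans[OF norm_sum]) (simp add: norm_mult)
  also have "\<dots> \<le> (\<Sum>i<m. \<Sum>j<m. cmod (A i j))"
  proof (intro sum_mono)
    fix i j assume "i \<in> {..<m}" "j \<in> {..<m}"
    then have "cmod (x i) * cmod (A i j) * cmod (x j) \<le> 1 * cmod (A i j) * 1"
      using x_le_1 by (intro mult_mono) auto
    then show "cmod (x i) * cmod (A i j) * cmod (x j) \<le> cmod (A i j)"
      by simp
  qed
  finally show "cmod (\<Sum>i<m. \<Sum>j<m. cnj (x i) * A i j * x j) \<le> (\<Sum>i<m. \<Sum>j<m. cmod (A i j))" .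
qed

lemma cmod_quadratic_form_le_numerical_radius:
  "cmod (\<Sum>i<m. \<Sum>j<m. cnj (u i) * A i j * u j)
     \<le> numerical_radius m A * (\<Sum>i<m. (cmod (u i))\<^sup>2)"
proof (cases "(\<Sum>i<m. (cmod (u i))\<^sup>2) = 0")
  case True
  then have "u i = 0" if "i < m" for i
    using that by (simp add: sum_nonneg_eq_0_iff)
  then show ?thesis
    using True by simp
next
  case False
  define S where "S = (\<Sum>i<m. (cmod (u i))\<^sup>2)"
  have "S > 0"
    using False by (simp add: S_def sum_nonneg order_le_neq_trans)
  define x where "x i = u i / of_real (sqrt S)" for i
  have x_unit: "(\<Sum>i<m. (cmod (x i))\<^sup>2) = 1"
    using \<open>S > 0\<close> by (simp add: x_def norm_divide power_divide S_def[symmetric] flip: sum_divide_distrib)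
  have "cmod (\<Sum>i<m. \<Sum>j<m. cnj (x i) * A i j * x j) \<le> numerical_radius m A"
    unfolding numerical_radius_def
    by (intro cSup_upper bdd_above_numerical_range) (use x_unit in blast)
  moreover have "(\<Sum>i<m. \<Sum>j<m. cnj (x i) * A i j * x j)
      = (\<Sum>i<m. \<Sum>j<m. cnj (u i) * A i j * u j) / of_real S"
    using \<open>S > 0\<close> by (simp add: x_def sum_divide_distrib field_simps flip: of_real_mult)
  ultimately show ?thesis
    using \<open>S > 0\<close> by (simp add: S_def[symmetric] norm_divide divide_le_eq)
qed

lemma B0_mult_powers:
  assumes "i < m"
  shows "(\<Sum>j<m. B0 m c i j * z ^ j)
    = z * z ^ i - (if i = m - 1 then z ^ m - (\<Sum>j<m. c j * z ^ j) else 0)"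
proof (cases "i = m - 1")
  case True
  then have "(\<Sum>j<m. B0 m c i j * z ^ j) = (\<Sum>j<m. c j * z ^ j)"
    using assms by (intro sum.cong) (auto simp: B0_def)
  moreover have "z * z ^ i = z ^ m"
    using True assms by (simp flip: power_Suc)
  ultimately show ?thesis
    using True by simp
next
  case False
  then have "(\<Sum>j<m. B0 m c i j * z ^ j) = (\<Sum>j<m. if j = i + 1 then z ^ j else 0)"
    by (intro sum.cong) (auto simp: B0_def)
  also have "\<dots> = z * z ^ i"
    using False assms by (simp add: sum.delta')
  finally show ?thesis
    using False by simp
qed

lemma companion_quadratic_form:
  assumes "m \<ge> 1"
  shows "(\<Sum>i<m. \<Sum>j<m. cnj (z ^ i) * B0 m c i j * z ^ j)
    = z * of_real (\<Sum>i<m. (cmod (z ^ i))\<^sup>2) - cnj (z ^ (m - 1)) * (z ^ m - (\<Sum>j<m. c j * z ^ j))"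
proof -
  have "(\<Sum>i<m. \<Sum>j<m. cnj (z ^ i) * B0 m c i j * z ^ j)
      = (\<Sum>i<m. cnj (z ^ i) * (\<Sum>j<m. B0 m c i j * z ^ j))"
    by (simp add: sum_distrib_left mult.assoc)
  also have "\<dots> = (\<Sum>i<m. z * of_real ((cmod (z ^ i))\<^sup>2)
      - (if i = m - 1 then cnj (z ^ i) * (z ^ m - (\<Sum>j<m. c j * z ^ j)) else 0))"
  proof (rule sum.cong)
    fix i assume "i \<in> {..<m}"
    then show "cnj (z ^ i) * (\<Sum>j<m. B0 m c i j * z ^ j) = z * of_real ((cmod (z ^ i))\<^sup>2)
        - (if i = m - 1 then cnj (z ^ i) * (z ^ m - (\<Sum>j<m. c j * z ^ j)) else 0)"
      by (simp only: B0_mult_powers lessThan_iff complex_norm_square) (simp add: algebra_simps)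
  qed simp
  also have "\<dots> = z * of_real (\<Sum>i<m. (cmod (z ^ i))\<^sup>2) - cnj (z ^ (m - 1)) * (z ^ m - (\<Sum>j<m. c j * z ^ j))"
    using assms by (simp add: sum_subtractf sum_distrib_left sum.delta')
  finally show ?thesis .
qed

lemma companion_bound:
  fixes z :: complex
  assumes "m \<ge> 1"
  defines "S \<equiv> \<Sum>i<m. (cmod (z ^ i))\<^sup>2"
  shows "cmod z * S \<le> numerical_radius m (B0 m c) * S + sqrt S * cmod (z ^ m - (\<Sum>j<m. c j * z ^ j))"
proof -
  define Q where "Q = (\<Sum>i<m. \<Sum>j<m. cnj (z ^ i) * B0 m c i j * z ^ j)"
  define R where "R = z ^ m - (\<Sum>j<m. c j * z ^ j)"
  have "z * of_real S = Q + cnj (z ^ (m - 1)) * R"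
    using companion_quadratic_form[OF assms(1), of z c] unfolding S_def Q_def R_def by simp
  moreover have "S \<ge> 0"
    by (simp add: S_def sum_nonneg)
  ultimately have "cmod z * S = cmod (Q + cnj (z ^ (m - 1)) * R)"
    by (metis norm_mult norm_of_real abs_of_nonneg)
  also have "\<dots> \<le> cmod Q + cmod (z ^ (m - 1)) * cmod R"
    using norm_triangle_ineq[of Q "cnj (z ^ (m - 1)) * R"] by (simp add: norm_mult norm_power)
  also have "cmod Q \<le> numerical_radius m (B0 m c) * S"
    unfolding Q_def S_def by (rule cmod_quadratic_form_le_numerical_radius)
  also have "cmod (z ^ (m - 1)) \<le> sqrt S"
    using member_le_sum[of "m - 1" "{..<m}" "\<lambda>i. (cmod (z ^ i))\<^sup>2"] assms(1)
    by (intro real_le_rsqrt) (simp add: S_def)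
  finally show ?thesis
    by (simp add: R_def mult_right_mono)
qed

lemma jordan_chain_bound:
  fixes z a :: complex
  assumes "z \<noteq> a"
  shows "cmod z * (\<Sum>k=1..K. (cmod (1 / (z - a) ^ k))\<^sup>2)
    \<le> (cmod a + cos (pi / real (K + 1))) * (\<Sum>k=1..K. (cmod (1 / (z - a) ^ k))\<^sup>2)
      + cmod (1 / (z - a))"
proof -
  define v where "v k = 1 / (z - a) ^ k" for k
  define T where "T = (\<Sum>k=1..K. (cmod (v k))\<^sup>2)"
  define P where "P = (\<Sum>k=1..K. cnj (v k) * v (k - 1))"
  have chain_shift: "z * v k = a * v k + v (k - 1)" if "k \<ge> 1" for k
    using that assms by (cases k) (auto simp: v_def field_simps)
  have "z * of_real ((cmod (v k))\<^sup>2) = a * of_real ((cmod (v k))\<^sup>2) + cnj (v k) * v (k - 1)"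
    if "k \<ge> 1" for k
    using that by (simp only: complex_norm_square mult.assoc[symmetric] chain_shift) (simp add: algebra_simps)
  then have "z * of_real T = a * of_real T + P"
    by (simp add: T_def P_def sum_distrib_left sum.distrib del: of_real_power)
  moreover have "T \<ge> 0"
    by (simp add: T_def sum_nonneg)
  ultimately have "cmod z * T = cmod (a * of_real T + P)"
    by (metis norm_mult norm_of_real abs_of_nonneg)
  also have "\<dots> \<le> cmod a * T + cmod P"
    using norm_triangle_ineq[of "a * of_real T" P] \<open>T \<ge> 0\<close> by (simp add: norm_mult)
  also have "cmod P \<le> (\<Sum>k=1..K. cmod (v k) * cmod (v (k - 1)))"
    unfolding P_def by (rule order.trans[OF norm_sum]) (simp add: norm_mult)
  also have "\<dots> \<le> cos (pi / real (K + 1)) * T + cmod (v 1)"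
  proof -
    define y where "y k = (if k = 0 then 0 else cmod (v k))" for k
    have "(\<Sum>k=1..K. cmod (v k) * cmod (v (k - 1)))
        = (\<Sum>k=1..K. y k * y (k - 1) + (if k = 1 then cmod (v 1) else 0))"
      by (intro sum.cong refl) (auto simp: y_def v_def)
    also have "\<dots> = (\<Sum>k=1..K. y k * y (k - 1)) + (\<Sum>k=1..K. if k = 1 then cmod (v 1) else 0)"
      by (rule sum.distrib)
    also have "(\<Sum>k=1..K. if k = 1 then cmod (v 1) else 0) \<le> cmod (v 1)"
      by (simp add: sum.delta)
    also have "(\<Sum>k=1..K. y k * y (k - 1)) \<le> cos (pi / real (K + 1)) * (\<Sum>k=1..K. (y k)\<^sup>2)"
      by (rule sum_shifted_products_le_cos) (simp add: y_def)
    also have "(\<Sum>k=1..K. (y k)\<^sup>2) = T"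
      by (simp add: T_def y_def)
    finally show ?thesis by simp
  qed
  finally show ?thesis
    by (simp add: T_def v_def algebra_simps)
qed

lemma jordan_chains_bound:
  fixes z :: complex and a :: "'a \<Rightarrow> complex" and mm :: "'a \<Rightarrow> nat"
  assumes "finite J"
    and "\<And>j. j \<in> J \<Longrightarrow> mm j \<ge> 1"
    and "\<And>j. j \<in> J \<Longrightarrow> z \<noteq> a j"
    and "\<And>j. j \<in> J \<Longrightarrow> cmod (a j) + cos (pi / real (mm j + 1)) \<le> \<alpha>"
  defines "T \<equiv> (\<Sum>j\<in>J. \<Sum>k=1..mm j. (cmod (1 / (z - a j) ^ k))\<^sup>2)"
  shows "cmod z * T \<le> \<alpha> * T + sqrt (real (\<Sum>j\<in>J. mm j)) * sqrt T"
proof -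
  define T\<^sub>j where "T\<^sub>j j = (\<Sum>k=1..mm j. (cmod (1 / (z - a j) ^ k))\<^sup>2)" for j
  have "cmod z * T = (\<Sum>j\<in>J. cmod z * T\<^sub>j j)"
    by (simp add: T_def T\<^sub>j_def sum_distrib_left)
  also have "\<dots> \<le> (\<Sum>j\<in>J. \<alpha> * T\<^sub>j j + cmod (1 / (z - a j)))"
  proof (rule sum_mono)
    fix j assume "j \<in> J"
    then have "(cmod (a j) + cos (pi / real (mm j + 1))) * T\<^sub>j j \<le> \<alpha> * T\<^sub>j j"
      using assms(4) by (intro mult_right_mono) (auto simp: T\<^sub>j_def sum_nonneg)
    then show "cmod z * T\<^sub>j j \<le> \<alpha> * T\<^sub>j j + cmod (1 / (z - a j))"
      using jordan_chain_bound[OF assms(3)[OF \<open>j \<in> J\<close>], of "mm j"] by (simp add: T\<^sub>j_def)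
  qed
  also have "\<dots> = \<alpha> * T + (\<Sum>j\<in>J. \<bar>1\<bar> * \<bar>cmod (1 / (z - a j))\<bar>)"
    by (simp add: sum.distrib T_def T\<^sub>j_def sum_distrib_left)
  also have "(\<Sum>j\<in>J. \<bar>1\<bar> * \<bar>cmod (1 / (z - a j))\<bar>)
      \<le> L2_set (\<lambda>_. 1) J * L2_set (\<lambda>j. cmod (1 / (z - a j))) J"
    by (rule L2_set_mult_ineq)
  also have "\<dots> \<le> sqrt (real (\<Sum>j\<in>J. mm j)) * sqrt T"
  proof (rule mult_mono)
    have "card J \<le> (\<Sum>j\<in>J. mm j)"
      using assms(2) card_eq_sum[of J] sum_mono[of J "\<lambda>_. 1::nat" mm] by simp
    then show "L2_set (\<lambda>_. 1) J \<le> sqrt (real (\<Sum>j\<in>J. mm j))"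
      by (simp add: L2_set_def del: of_nat_sum)
    have "(\<Sum>j\<in>J. (cmod (1 / (z - a j)))\<^sup>2) \<le> T"
      unfolding T_def
    proof (rule sum_mono)
      fix j assume "j \<in> J"
      then show "(cmod (1 / (z - a j)))\<^sup>2 \<le> (\<Sum>k=1..mm j. (cmod (1 / (z - a j) ^ k))\<^sup>2)"
        using member_le_sum[of 1 "{1..mm j}" "\<lambda>k. (cmod (1 / (z - a j) ^ k))\<^sup>2"] assms(2) by simp
    qed
    then show "L2_set (\<lambda>j. cmod (1 / (z - a j))) J \<le> sqrt T"
      by (simp add: L2_set_def)
  qed (auto intro: sum_nonneg)
  finally show ?thesis
    by simp
qed

lemma rfun_zero_polynomial_part_le:
  assumes "rfun m c n a mm b z = 0"
  shows "cmod (z ^ m - (\<Sum>i<m. c i * z ^ i))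
    \<le> sqrt (\<Sum>j=1..n. \<Sum>k=1..mm j. (cmod (b j k))\<^sup>2)
      * sqrt (\<Sum>j=1..n. \<Sum>k=1..mm j. (cmod (1 / (z - of_real (a j)) ^ k))\<^sup>2)"
proof -
  have "z ^ m - (\<Sum>i<m. c i * z ^ i)
      = (\<Sum>j=1..n. \<Sum>k=1..mm j. b j k * (1 / (z - of_real (a j)) ^ k))"
    using assms by (simp add: rfun_def)
  then show ?thesis
    using cmod_double_sum_mult_le[of "{1..n}" "\<lambda>j. {1..mm j}" b "\<lambda>j k. 1 / (z - of_real (a j)) ^ k"]
    by simp
qed

theorem theorem3p5:
  fixes m n :: nat and a :: "nat \<Rightarrow> real" and mm :: "nat \<Rightarrow> nat"
    and c :: "nat \<Rightarrow> complex" and b :: "nat \<Rightarrow> nat \<Rightarrow> complex" and z0 :: complex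
  assumes "m \<ge> 1" and "n \<ge> 1"
    and "inj_on a {1..n}"
    and "\<forall>j\<in>{1..n}. a j \<ge> 0"
    and "\<forall>j\<in>{1..n}. mm j \<ge> 1"
    and "\<forall>j\<in>{1..n}. z0 \<noteq> complex_of_real (a j)"
    and "rfun m c n a mm b z0 = 0"
  shows "cmod z0 \<le>
    (let \<alpha> = Max ((\<lambda>j. a j + cos (pi / real (mm j + 1))) ` {1..n});
         \<beta> = numerical_radius m (B0 m c);
         \<gamma> = sqrt (real (\<Sum>j=1..n. mm j));
         \<delta> = sqrt (\<Sum>j=1..n. \<Sum>k=1..mm j. (cmod (b j k))^2)
     in (\<alpha> + \<beta> + sqrt ((\<alpha> - \<beta>)^2 + (\<gamma> + \<delta>)^2)) / 2)"
proof -
  define \<alpha> where "\<alpha> = Max ((\<lambda>j. a j + cos (pi / real (mm j + 1))) ` {1..n})"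
  define \<beta> where "\<beta> = numerical_radius m (B0 m c)"
  define \<gamma> where "\<gamma> = sqrt (real (\<Sum>j=1..n. mm j))"
  define \<delta> where "\<delta> = sqrt (\<Sum>j=1..n. \<Sum>k=1..mm j. (cmod (b j k))^2)"
  define S where "S = (\<Sum>i<m. (cmod (z0 ^ i))\<^sup>2)"
  define T where "T = (\<Sum>j=1..n. \<Sum>k=1..mm j. (cmod (1 / (z0 - of_real (a j)) ^ k))\<^sup>2)"
  have "1 \<le> S"
    using member_le_sum[of 0 "{..<m}" "\<lambda>i. (cmod (z0 ^ i))\<^sup>2"] assms(1) by (simp add: S_def)
  have "cmod z0 * S \<le> \<beta> * S + sqrt S * cmod (z0 ^ m - (\<Sum>i<m. c i * z0 ^ i))"
    unfolding S_def \<beta>_def by (rule companion_bound[OF assms(1)])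
  also have "\<dots> \<le> \<beta> * S + sqrt S * (\<delta> * sqrt T)"
    using rfun_zero_polynomial_part_le[OF assms(7)] \<open>1 \<le> S\<close>
    by (intro add_left_mono mult_left_mono) (auto simp: \<delta>_def T_def)
  finally have "cmod z0 * S \<le> \<beta> * S + sqrt S * (\<delta> * sqrt T)" .
  moreover have "cmod z0 * T \<le> \<alpha> * T + \<gamma> * sqrt T"
    unfolding T_def \<gamma>_def using assms(4-6)
    by (intro jordan_chains_bound) (auto simp: \<alpha>_def intro: Max_ge)
  moreover have "0 \<le> T" "0 \<le> \<gamma>" "0 \<le> \<delta>"
    by (simp_all add: T_def \<gamma>_def \<delta>_def sum_nonneg)
  ultimately have "cmod z0 * (S + T) \<le> \<beta> * S + \<alpha> * T + (\<gamma> + \<delta>) * sqrt S * sqrt T"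
    using \<open>1 \<le> S\<close> mult_right_mono[of 1 "sqrt S" "\<gamma> * sqrt T"] by (simp add: algebra_simps)
  then show ?thesis
    using le_max_eigenvalue_2x2[of "\<gamma> + \<delta>" S T] \<open>1 \<le> S\<close> \<open>0 \<le> T\<close> \<open>0 \<le> \<gamma>\<close> \<open>0 \<le> \<delta>\<close>
    by (simp add: Let_def \<alpha>_def \<beta>_def \<gamma>_def \<delta>_def)
qed

end
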